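(* Let $m=x_{i_1}x_{i_2}\cdots x_{i_s}$ be a squarefree monomial of $S=k[x_1,\dots,x_n]$ with $i_1<i_2<\dots<i_s$, and let $B=\mathrm{sfBorel}(m)$. Then \[B^{\vee}=\mathrm{sfBorel}\big(x_1x_2\cdots x_{i_1},\; x_2x_3\cdots x_{i_2},\;\dots,\; x_sx_{s+1}\cdots x_{i_s}\big).\]
   Context: For monomials $m_1=x_{a_1}\cdots x_{a_r}$, $m_2=x_{b_1}\cdots x_{b_t}$ in factored form (indices weakly increasing), $m_1$ precedes $m_2$ in the Borel order if $r\ge t$ and $a_j\le b_j$ for $j\le t$. For a set $T$ of squarefree monomials, $\mathrm{sfBorel}(T)$ is the ideal generated by all squarefree monomials that precede some element of $T$ in the Borel order (the smallest squarefree Borel ideal containing $T$). For a squarefree monomial $u$, $P_u$ is the prime ideal generated by the variables dividing $u$. The Alexander dual of a squarefree monomial ideal $I$ with minimal monomial generators $u_1,\dots,u_t$ is $I^{\vee}=P_{u_1}\cap\dots\cap P_{u_t}$. *)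

theory Defs
  imports Main "HOL-Library.Multiset"
begin

text \<open>Monomials of S = k[x_1,...,x_n] are represented by multisets of variable
indices (index i with multiplicity e means x_i^e).  A monomial ideal is represented
by the set of monomials it contains; divisibility of monomials is multiset inclusion.\<close>

definition monomial :: "nat \<Rightarrow> nat multiset \<Rightarrow> bool" where
  "monomial n u \<longleftrightarrow> set_mset u \<subseteq> {1..n}"

definition sqfree :: "nat multiset \<Rightarrow> bool" where
  "sqfree u \<longleftrightarrow> (\<forall>i. count u i \<le> 1)"

definition mon_ideal :: "nat \<Rightarrow> nat multiset set \<Rightarrow> nat multiset set" where
  "mon_ideal n G = {w. monomial n w \<and> (\<exists>g\<in>G. g \<subseteq># w)}"

definition borel_prec :: "nat multiset \<Rightarrow> nat multiset \<Rightarrow> bool" where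
  "borel_prec m1 m2 \<longleftrightarrow>
     (let a = sorted_list_of_multiset m1; b = sorted_list_of_multiset m2
      in length b \<le> length a \<and> (\<forall>j<length b. a ! j \<le> b ! j))"

definition sfBorel :: "nat \<Rightarrow> nat multiset set \<Rightarrow> nat multiset set" where
  "sfBorel n T = mon_ideal n {u. monomial n u \<and> sqfree u \<and> (\<exists>t\<in>T. borel_prec u t)}"

definition min_gens :: "nat multiset set \<Rightarrow> nat multiset set" where
  "min_gens I = {u\<in>I. \<forall>v\<in>I. v \<subseteq># u \<longrightarrow> v = u}"

definition prime_of :: "nat \<Rightarrow> nat multiset \<Rightarrow> nat multiset set" where
  "prime_of n u = mon_ideal n {{#i#} | i. i \<in># u}"

definition alex_dual :: "nat \<Rightarrow> nat multiset set \<Rightarrow> nat multiset set" where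
  "alex_dual n I = {w. monomial n w \<and> (\<forall>u\<in>min_gens I. w \<in> prime_of n u)}"

end

theory Submission
  imports Defs
begin

(* Squarefree monomials are identified with their supports, finite sets of variable indices.
   For finite sets the Borel order compares the k-th smallest elements, and it is equivalent
   to a counting condition: A precedes G iff A has at least k+1 elements that are \<le> the
   k-th smallest element g_k of G (counting from 0), for every k < |G|.

   With s = |G|, the minimal generators of sfBorel(G) are the s-subsets U of {1..n} with
   U \<preceq> G, so a monomial w lies in the Alexander dual iff its support A meets every such U.
   Passing to the complement C = {1..n} - A, this fails iff C itself precedes G (then C
   contains such a U), i.e. iff |A \<inter> {..g_k}| < g_k - k for all k.  On the other side,
   w lies in sfBorel(x_{k+1} \<cdots> x_{g_k}) iff |A \<inter> {..g_k}| \<ge> g_k - k. *)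

abbreviation ith :: "nat set \<Rightarrow> nat \<Rightarrow> nat" where
  "ith G k \<equiv> sorted_list_of_set G ! k"

definition set_prec :: "nat set \<Rightarrow> nat set \<Rightarrow> bool" where
  "set_prec A G \<longleftrightarrow> card G \<le> card A \<and> (\<forall>k<card G. ith A k \<le> ith G k)"

lemma ith_le_iff_card_below:
  assumes "finite A"
  shows "k < card A \<and> ith A k \<le> x \<longleftrightarrow> k + 1 \<le> card (A \<inter> {..x})"
proof
  let ?L = "sorted_list_of_set A"
  assume k: "k < card A \<and> ith A k \<le> x"
  have "set (take (k + 1) ?L) \<subseteq> A \<inter> {..x}"
  proof
    fix a assume "a \<in> set (take (k + 1) ?L)"
    then obtain p where p: "p < length (take (k + 1) ?L)" "take (k + 1) ?L ! p = a"
      by (auto simp: in_set_conv_nth)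
    then have "p \<le> k" "a = ?L ! p" by auto
    then have "a \<le> ith A k" "a \<in> A"
      using k assms by (auto simp: sorted_nth_mono)
        (metis le_less_trans length_sorted_list_of_set nth_mem set_sorted_list_of_set)
    then show "a \<in> A \<inter> {..x}" using k by auto
  qed
  moreover have "card (set (take (k + 1) ?L)) = k + 1"
    using k by (simp add: distinct_card)
  ultimately show "k + 1 \<le> card (A \<inter> {..x})"
    by (metis assms card_mono finite_Int)
next
  let ?L = "sorted_list_of_set A"
  assume below: "k + 1 \<le> card (A \<inter> {..x})"
  have k: "k < card A"
    using below card_mono[of A "A \<inter> {..x}"] assms by auto
  have "ith A k \<le> x"
  proof (rule ccontr)
    assume big: "\<not> ith A k \<le> x"
    have "A \<inter> {..x} \<subseteq> set (take k ?L)"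
    proof
      fix a assume a: "a \<in> A \<inter> {..x}"
      then have "a \<in> set ?L" using assms by simp
      then obtain p where p: "p < length ?L" "?L ! p = a" by (auto simp: in_set_conv_nth)
      have "p < k"
      proof (rule ccontr)
        assume "\<not> p < k"
        then have "ith A k \<le> ?L ! p" using p(1) by (simp add: sorted_nth_mono)
        then show False using big a p by auto
      qed
      then show "a \<in> set (take k ?L)" using p by (auto simp: in_set_conv_nth)
    qed
    then have "card (A \<inter> {..x}) \<le> k"
      by (metis card_length card_mono dual_order.trans finite_set length_take min.bounded_iff)
    then show False using below by simp
  qed
  then show "k < card A \<and> ith A k \<le> x" using k by simp
qed

lemma set_prec_iff_counts:
  assumes "finite A"
  shows "set_prec A G \<longleftrightarrow> (\<forall>k<card G. k + 1 \<le> card (A \<inter> {..ith G k}))"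
proof -
  have "card G \<le> card A" if "\<forall>k<card G. k < card A"
    using that by (cases "card G") auto
  then have "set_prec A G \<longleftrightarrow> (\<forall>k<card G. k < card A \<and> ith A k \<le> ith G k)"
    unfolding set_prec_def by auto
  also have "\<dots> \<longleftrightarrow> (\<forall>k<card G. k + 1 \<le> card (A \<inter> {..ith G k}))"
    using ith_le_iff_card_below[OF assms] by blast
  finally show ?thesis .
qed

lemma set_prec_mono:
  assumes "finite B" "A \<subseteq> B" "set_prec A G"
  shows "set_prec B G"
proof -
  have "finite A" using assms finite_subset by blast
  moreover have "card (A \<inter> {..x}) \<le> card (B \<inter> {..x})" for x
    using assms by (intro card_mono) auto
  ultimately show ?thesis
    using assms set_prec_iff_counts by (meson le_trans)
qed

(* The |G| smallest elements of a set preceding G still precede G. *)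
lemma set_prec_truncate:
  assumes "finite A" "set_prec A G"
  obtains U where "U \<subseteq> A" "card U = card G" "set_prec U G"
proof -
  let ?T = "take (card G) (sorted_list_of_set A)"
  have sorted_T: "sorted_list_of_set (set ?T) = ?T"
    by (simp add: sorted_list_of_set.idem_if_sorted_distinct sorted_wrt_take)
  have "set ?T \<subseteq> A" using assms(1) by (metis set_sorted_list_of_set set_take_subset)
  moreover have card_T: "card (set ?T) = card G"
    using assms(2) by (simp add: distinct_card set_prec_def)
  moreover have "set_prec (set ?T) G"
    using assms(2) unfolding set_prec_def card_T sorted_T by simp
  ultimately show ?thesis using that by blast
qed

lemma ith_ge_succ:
  assumes "finite G" "G \<subseteq> {1..}" "k < card G"
  shows "k + 1 \<le> ith G k"
proof -
  have "k + 1 \<le> card (G \<inter> {..ith G k})"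
    using ith_le_iff_card_below[OF assms(1)] assms(3) by blast
  also have "\<dots> \<le> card {1..ith G k}"
    using assms(2) by (intro card_mono) auto
  finally show ?thesis by simp
qed

lemma set_prec_interval:
  assumes "finite A"
  shows "set_prec A {j+1..x} \<longleftrightarrow> x - j \<le> card (A \<inter> {..x})"
proof -
  have ith_interval: "ith {j+1..x} k = j + 1 + k" if "k < x - j" for k
  proof -
    have "sorted_list_of_set {j+1..x} = [j+1..<x+1]"
      by (metis atLeastLessThanSuc_atLeastAtMost sorted_list_of_set_range Suc_eq_plus1)
    then show ?thesis using that by (simp del: upt_Suc)
  qed
  have "set_prec A {j+1..x} \<longleftrightarrow> (\<forall>k<x-j. k + 1 \<le> card (A \<inter> {..j+1+k}))"
    using ith_interval by (simp add: set_prec_iff_counts[OF assms])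
  also have "\<dots> \<longleftrightarrow> x - j \<le> card (A \<inter> {..x})"
  proof
    assume counts: "\<forall>k<x-j. k + 1 \<le> card (A \<inter> {..j+1+k})"
    show "x - j \<le> card (A \<inter> {..x})"
    proof (cases "x - j")
      case (Suc k)
      then have "j + 1 + k = x" by simp
      then show ?thesis using counts[rule_format, of k] Suc by simp
    qed simp
  next
    assume top: "x - j \<le> card (A \<inter> {..x})"
    show "\<forall>k<x-j. k + 1 \<le> card (A \<inter> {..j+1+k})"
    proof (intro allI impI)
      fix k assume k: "k < x - j"
      let ?t = "j + 1 + k"
      have "A \<inter> {..x} \<subseteq> (A \<inter> {..?t}) \<union> {?t<..x}" by auto
      then have "card (A \<inter> {..x}) \<le> card (A \<inter> {..?t}) + card {?t<..x}"
        by (meson assms card_Un_le card_mono finite_Int finite_UnI finite_greaterThanAtMost le_trans)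
      then show "k + 1 \<le> card (A \<inter> {..?t})" using top k by simp
    qed
  qed
  finally show ?thesis .
qed

lemma card_below_complement:
  assumes "A \<subseteq> {1..n}" "x \<le> n"
  shows "card (({1..n} - A) \<inter> {..x}) = x - card (A \<inter> {..x})"
proof -
  have "(A \<inter> {..x}) \<union> (({1..n} - A) \<inter> {..x}) = {1..x}" using assms by auto
  then have "card (A \<inter> {..x}) + card (({1..n} - A) \<inter> {..x}) = x"
    by (metis card_Un_disjoint card_atLeastAtMost diff_Suc_1 finite_Int finite_atMost
        Diff_disjoint Int_Diff_disjoint inf_commute inf_left_commute)
  then show ?thesis by simp
qed

(* Combinatorial core: A meets every |G|-subset of {1..n} preceding G iff, for some k,
   A has at least g_k - k elements \<le> g_k.  The converse direction applies truncation to the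
   complement of A. *)
lemma hitting_iff_count:
  assumes "finite G" "G \<subseteq> {1..n}" "A \<subseteq> {1..n}"
  shows "(\<forall>U\<subseteq>{1..n}. card U = card G \<and> set_prec U G \<longrightarrow> U \<inter> A \<noteq> {}) \<longleftrightarrow>
         (\<exists>k<card G. ith G k - k \<le> card (A \<inter> {..ith G k}))"
proof -
  define C where "C = {1..n} - A"
  have ith_in_G: "ith G k \<in> G" if "k < card G" for k
    using that assms(1) by (metis length_sorted_list_of_set nth_mem set_sorted_list_of_set)
  have count_C: "card (C \<inter> {..ith G k}) = ith G k - card (A \<inter> {..ith G k})"
    if "k < card G" for k
    unfolding C_def using ith_in_G[OF that] assms by (intro card_below_complement) auto
  show ?thesis
  proof
    assume hits: "\<forall>U\<subseteq>{1..n}. card U = card G \<and> set_prec U G \<longrightarrow> U \<inter> A \<noteq> {}"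
    show "\<exists>k<card G. ith G k - k \<le> card (A \<inter> {..ith G k})"
    proof (rule ccontr)
      assume "\<not> ?thesis"
      then have "\<forall>k<card G. k + 1 \<le> card (C \<inter> {..ith G k})"
        using count_C by fastforce
      then have "set_prec C G" unfolding C_def by (simp add: set_prec_iff_counts)
      moreover have "finite C" unfolding C_def by simp
      ultimately obtain U where "U \<subseteq> C" "card U = card G" "set_prec U G"
        using set_prec_truncate by blast
      moreover have "U \<subseteq> {1..n}" "U \<inter> A = {}" using \<open>U \<subseteq> C\<close> unfolding C_def by auto
      ultimately show False using hits by blast
    qed
  next
    assume "\<exists>k<card G. ith G k - k \<le> card (A \<inter> {..ith G k})"
    then obtain k where k: "k < card G" "ith G k - k \<le> card (A \<inter> {..ith G k})" by blast
    show "\<forall>U\<subseteq>{1..n}. card U = card G \<and> set_prec U G \<longrightarrow> U \<inter> A \<noteq> {}"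
    proof (intro allI impI notI)
      fix U assume U: "U \<subseteq> {1..n}" "card U = card G \<and> set_prec U G" and disjoint: "U \<inter> A = {}"
      have "finite U" using U(1) finite_subset by blast
      then have "k + 1 \<le> card (U \<inter> {..ith G k})"
        using U(2) k(1) by (simp add: set_prec_iff_counts)
      also have "\<dots> \<le> card (C \<inter> {..ith G k})"
        using U(1) disjoint unfolding C_def by (intro card_mono) auto
      also have "\<dots> \<le> k"
        using count_C[OF k(1)] k(2) ith_ge_succ[OF assms(1) _ k(1)] assms(2) by force
      finally show False by simp
    qed
  qed
qed

lemma sqfree_eq_mset_set:
  assumes "sqfree u"
  shows "u = mset_set (set_mset u)"
proof (rule multiset_eqI)
  fix x
  have "count u x \<le> 1" using assms unfolding sqfree_def by blast
  then show "count u x = count (mset_set (set_mset u)) x"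
    by (cases "x \<in># u") (auto simp: count_eq_zero_iff le_Suc_eq)
qed

lemma sqfree_mset_set: "sqfree (mset_set A)"
  unfolding sqfree_def by (simp add: count_mset_set')

lemma borel_prec_mset_set:
  assumes "finite A" "finite G"
  shows "borel_prec (mset_set A) (mset_set G) \<longleftrightarrow> set_prec A G"
  using assms unfolding borel_prec_def set_prec_def by (simp add: Let_def)

lemma mem_sfBorel_principal:
  assumes "finite G"
  shows "w \<in> sfBorel n {mset_set G} \<longleftrightarrow> monomial n w \<and> set_prec (set_mset w) G"
proof
  assume "w \<in> sfBorel n {mset_set G}"
  then obtain u where u: "monomial n w" "u \<subseteq># w" "sqfree u" "borel_prec u (mset_set G)"
    unfolding sfBorel_def mon_ideal_def by auto
  have "set_prec (set_mset u) G"
    using u(3,4) borel_prec_mset_set[OF _ assms] sqfree_eq_mset_set by (metis finite_set_mset)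
  moreover have "set_mset u \<subseteq> set_mset w" using u(2) by (rule set_mset_mono)
  ultimately show "monomial n w \<and> set_prec (set_mset w) G"
    using set_prec_mono u(1) by blast
next
  assume w: "monomial n w \<and> set_prec (set_mset w) G"
  let ?u = "mset_set (set_mset w)"
  have "?u \<subseteq># w" by (rule mset_set_set_mset_msubset)
  moreover have "monomial n ?u" using w unfolding monomial_def by simp
  moreover have "borel_prec ?u (mset_set G)" using w borel_prec_mset_set[OF _ assms] by simp
  ultimately show "w \<in> sfBorel n {mset_set G}"
    using w sqfree_mset_set unfolding sfBorel_def mon_ideal_def by blast
qed

lemma mem_sfBorel_iff: "w \<in> sfBorel n T \<longleftrightarrow> (\<exists>t\<in>T. w \<in> sfBorel n {t})"
  unfolding sfBorel_def mon_ideal_def by blast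

lemma min_gens_sfBorel_principal:
  assumes "finite G"
  shows "u \<in> min_gens (sfBorel n {mset_set G}) \<longleftrightarrow>
         (\<exists>U\<subseteq>{1..n}. card U = card G \<and> set_prec U G \<and> u = mset_set U)"
proof
  assume u: "u \<in> min_gens (sfBorel n {mset_set G})"
  then have "monomial n u" "set_prec (set_mset u) G"
    using mem_sfBorel_principal[OF assms] unfolding min_gens_def by auto
  then obtain U where U: "U \<subseteq> set_mset u" "card U = card G" "set_prec U G"
    using set_prec_truncate by blast
  have "finite U" using U(1) finite_subset by blast
  have U_range: "U \<subseteq> {1..n}" using U(1) \<open>monomial n u\<close> unfolding monomial_def by blast
  have "mset_set U \<in> sfBorel n {mset_set G}"
    using U(3) U_range \<open>finite U\<close> by (simp add: mem_sfBorel_principal[OF assms] monomial_def)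
  moreover have "mset_set U \<subseteq># u"
    using U(1) by (metis finite_set_mset mset_set_set_mset_msubset subset_imp_msubset_mset_set
        subset_mset.order_trans)
  ultimately have "mset_set U = u" using u unfolding min_gens_def by blast
  then show "\<exists>U\<subseteq>{1..n}. card U = card G \<and> set_prec U G \<and> u = mset_set U"
    using U U_range by auto
next
  assume "\<exists>U\<subseteq>{1..n}. card U = card G \<and> set_prec U G \<and> u = mset_set U"
  then obtain U where U: "U \<subseteq> {1..n}" "card U = card G" "set_prec U G" "u = mset_set U"
    by blast
  have "finite U" using U(1) finite_subset by blast
  then have supp_u: "set_mset u = U" using U(4) by simp
  have "u \<in> sfBorel n {mset_set G}"
    using U supp_u by (simp add: mem_sfBorel_principal[OF assms] monomial_def)
  moreover have "v = u" if v: "v \<in> sfBorel n {mset_set G}" "v \<subseteq># u" for v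
  proof -
    have "set_prec (set_mset v) G" using v(1) mem_sfBorel_principal[OF assms] by blast
    then have "card U \<le> card (set_mset v)" using U(2) unfolding set_prec_def by simp
    moreover have "set_mset v \<subseteq> U" using v(2) supp_u set_mset_mono by blast
    ultimately have "set_mset v = U" using \<open>finite U\<close> by (simp add: card_seteq)
    then have "u \<subseteq># v" using U(4) by (metis mset_set_set_mset_msubset)
    then show "v = u" using v(2) by (rule subset_mset.antisym[rotated])
  qed
  ultimately show "u \<in> min_gens (sfBorel n {mset_set G})" unfolding min_gens_def by blast
qed

lemma mem_prime_of_iff: "w \<in> prime_of n u \<longleftrightarrow> monomial n w \<and> set_mset u \<inter> set_mset w \<noteq> {}"
  unfolding prime_of_def mon_ideal_def by auto

lemma mem_alex_dual_sfBorel_principal: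
  assumes "finite G"
  shows "w \<in> alex_dual n (sfBorel n {mset_set G}) \<longleftrightarrow>
         monomial n w \<and> (\<forall>U\<subseteq>{1..n}. card U = card G \<and> set_prec U G \<longrightarrow> U \<inter> set_mset w \<noteq> {})"
proof -
  have supp: "set_mset (mset_set U) = U" if "U \<subseteq> {1..n}" for U
    using that finite_subset by (metis finite_atLeastAtMost finite_set_mset_mset_set)
  have "w \<in> alex_dual n (sfBorel n {mset_set G}) \<longleftrightarrow>
        monomial n w \<and> (\<forall>U\<subseteq>{1..n}. card U = card G \<and> set_prec U G \<longrightarrow>
           w \<in> prime_of n (mset_set U))"
    unfolding alex_dual_def Ball_def min_gens_sfBorel_principal[OF assms] by blast
  also have "\<dots> \<longleftrightarrow> monomial n w \<and>
      (\<forall>U\<subseteq>{1..n}. card U = card G \<and> set_prec U G \<longrightarrow> U \<inter> set_mset w \<noteq> {})"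
    unfolding mem_prime_of_iff using supp by auto
  finally show ?thesis .
qed

lemma mem_sfBorel_intervals:
  "w \<in> sfBorel n {mset_set {k+1 .. x k} | k. k < s} \<longleftrightarrow>
   monomial n w \<and> (\<exists>k<s. x k - k \<le> card (set_mset w \<inter> {..x k}))"
proof -
  have "w \<in> sfBorel n {mset_set {k+1 .. x k} | k. k < s} \<longleftrightarrow>
        (\<exists>k<s. w \<in> sfBorel n {mset_set {k+1 .. x k}})"
    by (subst mem_sfBorel_iff) blast
  also have "\<dots> \<longleftrightarrow> (\<exists>k<s. monomial n w \<and> set_prec (set_mset w) {k+1 .. x k})"
    by (simp only: mem_sfBorel_principal[OF finite_atLeastAtMost])
  finally show ?thesis
    using set_prec_interval[OF finite_set_mset] by blast
qed

theorem alex_dual_sfBorel_principal: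
  assumes "finite G" "G \<subseteq> {1..n}"
  shows "alex_dual n (sfBorel n {mset_set G}) =
         sfBorel n {mset_set {k+1 .. ith G k} | k. k < card G}"
proof (rule set_eqI)
  fix w
  have "w \<in> alex_dual n (sfBorel n {mset_set G}) \<longleftrightarrow>
        monomial n w \<and> (\<forall>U\<subseteq>{1..n}. card U = card G \<and> set_prec U G \<longrightarrow> U \<inter> set_mset w \<noteq> {})"
    by (rule mem_alex_dual_sfBorel_principal[OF assms(1)])
  also have "\<dots> \<longleftrightarrow> monomial n w \<and> (\<exists>k<card G. ith G k - k \<le> card (set_mset w \<inter> {..ith G k}))"
    using hitting_iff_count[OF assms, of "set_mset w"] unfolding monomial_def by blast
  also have "\<dots> \<longleftrightarrow> w \<in> sfBorel n {mset_set {k+1 .. ith G k} | k. k < card G}"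
    by (rule mem_sfBorel_intervals[symmetric])
  finally show "w \<in> alex_dual n (sfBorel n {mset_set G}) \<longleftrightarrow>
                w \<in> sfBorel n {mset_set {k+1 .. ith G k} | k. k < card G}" .
qed

theorem theorem3p18:
  fixes n :: nat and i :: "nat list"
  assumes "sorted_wrt (<) i" and "set i \<subseteq> {1..n}"
  shows "alex_dual n (sfBorel n {mset i}) =
         sfBorel n {mset_set {j+1 .. i ! j} | j. j < length i}"
proof -
  have "distinct i" using assms(1) by (simp add: strict_sorted_iff)
  then have "mset i = mset_set (set i)" "card (set i) = length i"
    by (simp_all add: mset_set_set distinct_card)
  moreover have "sorted_list_of_set (set i) = i"
    using assms(1) by (simp add: sorted_list_of_set.idem_if_sorted_distinct strict_sorted_iff)
  ultimately show ?thesis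
    using alex_dual_sfBorel_principal[OF finite_set assms(2)] by simp
qed

end
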